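(* Fix integers $\tau_1\ge\tau_2\ge 1$. For each integer $n>\tau_1$ let $\mathcal{E}^{(n)}\subseteq\mathbb{R}^2$ be the set of all pairs $$\Big(\mathsf{E}^{(n)}_r,\mathsf{E}^{(n)}_d\Big)=\left(\frac{\log(n\bar\alpha-\bar M)}{\log n},\ \frac{\log \bar M}{\log n}\right)$$ such that $(\bar\alpha,\bar M)$ is achievable for $(n,k,d)=(n,n-\tau_1,n-\tau_2)$ exact-repair regenerating (with $n\bar\alpha-\bar M>0$ and $\bar M>0$). Let $\mathcal{E}$ be the closure of $\limsup_{n\to\infty}\mathcal{E}^{(n)}$, and let $$\mathcal{E}^*=\{(\mathsf{E}_r,\mathsf{E}_d)\in\mathbb{R}^2:\ \mathsf{E}_d\le \mathsf{E}_r+1,\ \ 2\mathsf{E}_d\le 2+\mathsf{E}_r,\ \ \mathsf{E}_d\le 2\}.$$ Then $\mathcal{E}^*=\mathcal{E}$.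
   Context: Write $I_m=\{1,\dots,m\}$. For integers $n,k,d$ with $1\le k\le d\le n-1$, an $(n,k,d,N,N_d,K)$ exact-repair regenerating code consists of encoding functions $f^E_i:I_N\to I_{N_d}$ ($i\in I_n$; node $i$ stores $f^E_i(m)$ for the message $m\in I_N$); for every $A\subseteq I_n$ with $|A|=k$ a decoding function $f^D_A:I_{N_d}^k\to I_N$ with $f^D_A((f^E_i(m))_{i\in A})=m$ for all $m$; and for every $j\in I_n$, every $A\subseteq I_n\setminus\{j\}$ with $|A|=d$ and every $i\in A$ a repair encoding function $F^E_{i,A,j}:I_{N_d}\to I_K$, together with a repair decoding function $F^D_{j,A}:I_K^d\to I_{N_d}$ such that $F^D_{j,A}((F^E_{i,A,j}(f^E_i(m)))_{i\in A})=f^E_j(m)$ for all $m$. A pair $(\bar\alpha,\bar M)$ of reals is achievable for $(n,k,d)$ if for every $\epsilon>0$ there is an $(n,k,d,N,N_d,K)$ exact-repair regenerating code with $\bar\alpha+\epsilon\ge \log N_d/\log K$ and $\bar M-\epsilon\le \log N/\log K$. The limit superior of a sequence of subsets of $\mathbb{R}^2$ is understood as the set of all points that are limits of sequences $x_j\in\mathcal{E}^{(n_j)}$ with $n_j\to\infty$. *)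

theory Defs
  imports "HOL-Analysis.Analysis"
begin

text \<open>I_m = {1..m}. Tuples indexed by a node set A are represented as functions
  nat => nat that are 0 outside A.\<close>

definition tuple_on :: "nat set \<Rightarrow> nat \<Rightarrow> (nat \<Rightarrow> nat) set" where
  "tuple_on A m = {t. (\<forall>i\<in>A. t i \<in> {1..m}) \<and> (\<forall>i. i \<notin> A \<longrightarrow> t i = 0)}"

definition restr :: "nat set \<Rightarrow> (nat \<Rightarrow> nat) \<Rightarrow> nat \<Rightarrow> nat" where
  "restr A g = (\<lambda>i. if i \<in> A then g i else 0)"

definition ER_code :: "nat \<Rightarrow> nat \<Rightarrow> nat \<Rightarrow> nat \<Rightarrow> nat \<Rightarrow> nat \<Rightarrow> bool" where
  "ER_code n k d N Nd K \<longleftrightarrow>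
     1 \<le> N \<and> 1 \<le> Nd \<and> 1 \<le> K \<and>
     (\<exists>(fE :: nat \<Rightarrow> nat \<Rightarrow> nat) (fD :: nat set \<Rightarrow> (nat \<Rightarrow> nat) \<Rightarrow> nat)
        (FE :: nat \<Rightarrow> nat set \<Rightarrow> nat \<Rightarrow> nat \<Rightarrow> nat) (FD :: nat \<Rightarrow> nat set \<Rightarrow> (nat \<Rightarrow> nat) \<Rightarrow> nat).
       (\<forall>i\<in>{1..n}. \<forall>m\<in>{1..N}. fE i m \<in> {1..Nd}) \<and>
       (\<forall>A. A \<subseteq> {1..n} \<and> card A = k \<longrightarrow>
          (\<forall>t\<in>tuple_on A Nd. fD A t \<in> {1..N}) \<and>
          (\<forall>m\<in>{1..N}. fD A (restr A (\<lambda>i. fE i m)) = m)) \<and>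
       (\<forall>j\<in>{1..n}. \<forall>A. A \<subseteq> {1..n} - {j} \<and> card A = d \<longrightarrow>
          (\<forall>i\<in>A. \<forall>x\<in>{1..Nd}. FE i A j x \<in> {1..K}) \<and>
          (\<forall>t\<in>tuple_on A K. FD j A t \<in> {1..Nd}) \<and>
          (\<forall>m\<in>{1..N}. FD j A (restr A (\<lambda>i. FE i A j (fE i m))) = fE j m)))"

definition achievable :: "nat \<Rightarrow> nat \<Rightarrow> nat \<Rightarrow> real \<Rightarrow> real \<Rightarrow> bool" where
  "achievable n k d \<alpha> M \<longleftrightarrow>
     (\<forall>\<epsilon>>0. \<exists>N Nd K. ER_code n k d N Nd K \<and>
        \<alpha> + \<epsilon> \<ge> ln (real Nd) / ln (real K) \<and> M - \<epsilon> \<le> ln (real N) / ln (real K))"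

definition Eset :: "nat \<Rightarrow> nat \<Rightarrow> nat \<Rightarrow> (real \<times> real) set" where
  "Eset \<tau>1 \<tau>2 n = {(ln (real n * \<alpha> - M) / ln (real n), ln M / ln (real n)) | \<alpha> M.
      achievable n (n - \<tau>1) (n - \<tau>2) \<alpha> M \<and> real n * \<alpha> - M > 0 \<and> M > 0}"

definition limsup_sets :: "nat \<Rightarrow> (nat \<Rightarrow> (real \<times> real) set) \<Rightarrow> (real \<times> real) set" where
  "limsup_sets n0 S = {p. \<exists>(nj :: nat \<Rightarrow> nat) (x :: nat \<Rightarrow> real \<times> real).
      (\<forall>j. nj j > n0 \<and> x j \<in> S (nj j)) \<and> filterlim nj at_top sequentially \<and> x \<longlonglongrightarrow> p}"

definition Estar :: "(real \<times> real) set" where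
  "Estar = {(Er, Ed). Ed \<le> Er + 1 \<and> 2 * Ed \<le> 2 + Er \<and> Ed \<le> 2}"

end

theory Submission
  imports Defs "HOL-Computational_Algebra.Polynomial" "HOL-Real_Asymp.Real_Asymp"
begin

text \<open>Converse: all that matters about a code is that stored symbols determine the message and
  repair symbols determine the lost content. Repairing nodes \<open>1, \<dots>, k\<close> one after the other, each
  from the helpers \<open>{1..d + 1}\<close> minus itself, then gives the cut-set bound
  \<open>M \<le> (\<Sum>l<k. min \<alpha> (d - l))\<close>. With \<open>\<beta> = min \<alpha> n\<close> this forces \<open>M \<le> n \<beta>\<close> and
  \<open>n \<alpha> - M \<ge> max \<beta> ((\<beta>\<^sup>2 - \<beta>) / 2)\<close>, i.e. the three inequalities of \<open>Estar\<close> up to an error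
  \<open>ln 3 / ln n\<close> that vanishes in the limit.

  Achievability: a layered code puts a polynomial (MDS) code of dimension \<open>r - \<tau>1\<close> on every
  \<open>r\<close>-set of nodes. Padding its repair alphabet by a factor \<open>t\<close>, it achieves
  \<open>\<alpha> = (n - 1) / ((r - 1) t)\<close> and \<open>M = n (n - 1) (r - \<tau>1) / (r (r - 1) t)\<close>; with \<open>r \<approx> n powr u\<close>
  and \<open>t \<approx> n powr w\<close> these have exponents \<open>2 - 2 u - w\<close> (for \<open>n \<alpha> - M\<close>) and \<open>2 - u - w\<close>, which
  reach every point of \<open>Estar\<close> after enlarging \<open>\<alpha>\<close>.\<close>

section \<open>Exact-repair codes as determining maps\<close>

lemma restr_eq_iff: "restr A f = restr A g \<longleftrightarrow> (\<forall>i\<in>A. f i = g i)"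
  unfolding restr_def fun_eq_iff by metis

definition factor_map :: "'a set \<Rightarrow> ('a \<Rightarrow> 'b) \<Rightarrow> ('a \<Rightarrow> 'c) \<Rightarrow> 'c \<Rightarrow> 'b \<Rightarrow> 'c" where
  "factor_map S f g c0 y = (if y \<in> f ` S then g (inv_into S f y) else c0)"

lemma factor_map_eq:
  assumes "\<forall>x\<in>S. \<forall>x'\<in>S. f x = f x' \<longrightarrow> g x = g x'" and "x \<in> S"
  shows "factor_map S f g c0 (f x) = g x"
proof -
  have "inv_into S f (f x) \<in> S" "f (inv_into S f (f x)) = f x"
    using assms(2) by (rule inv_into_into[OF imageI], rule f_inv_into_f[OF imageI])
  then have "g (inv_into S f (f x)) = g x"
    using assms by blast
  then show ?thesis
    using assms(2) unfolding factor_map_def by simp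
qed

lemma factor_map_in:
  assumes "g ` S \<subseteq> T" and "c0 \<in> T"
  shows "factor_map S f g c0 y \<in> T"
proof (cases "y \<in> f ` S")
  case True
  then have "inv_into S f y \<in> S" by (rule inv_into_into)
  then show ?thesis using True assms(1) unfolding factor_map_def by auto
qed (use assms(2) in \<open>simp add: factor_map_def\<close>)

text \<open>An exact-repair code up to its decoders: the \<open>k\<close> stored symbols of any \<open>k\<close> nodes determine
  the message, and the \<open>d\<close> repair symbols sent to node \<open>j\<close> determine its content.\<close>

locale ER_scheme =
  fixes n k d N Nd K :: nat
    and fE :: "nat \<Rightarrow> nat \<Rightarrow> nat" and FE :: "nat \<Rightarrow> nat set \<Rightarrow> nat \<Rightarrow> nat \<Rightarrow> nat"
  assumes encode_range: "\<lbrakk>i \<in> {1..n}; m \<in> {1..N}\<rbrakk> \<Longrightarrow> fE i m \<in> {1..Nd}"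
    and decode: "\<lbrakk>A \<subseteq> {1..n}; card A = k; m \<in> {1..N}; m' \<in> {1..N};
        \<And>i. i \<in> A \<Longrightarrow> fE i m = fE i m'\<rbrakk> \<Longrightarrow> m = m'"
    and repair_range: "\<lbrakk>j \<in> {1..n}; A \<subseteq> {1..n} - {j}; card A = d; i \<in> A; x \<in> {1..Nd}\<rbrakk>
        \<Longrightarrow> FE i A j x \<in> {1..K}"
    and repair: "\<lbrakk>j \<in> {1..n}; A \<subseteq> {1..n} - {j}; card A = d; m \<in> {1..N}; m' \<in> {1..N};
        \<And>i. i \<in> A \<Longrightarrow> FE i A j (fE i m) = FE i A j (fE i m')\<rbrakk> \<Longrightarrow> fE j m = fE j m'"

lemma ER_code_obtain_scheme:
  assumes "ER_code n k d N Nd K"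
  obtains fE FE where "1 \<le> N" "1 \<le> Nd" "1 \<le> K" "ER_scheme n k d N Nd K fE FE"
proof -
  obtain fE fD FE FD where bounds: "1 \<le> N" "1 \<le> Nd" "1 \<le> K"
    and enc: "\<forall>i\<in>{1..n}. \<forall>m\<in>{1..N}. fE i m \<in> {1..Nd}"
    and dec: "\<forall>A. A \<subseteq> {1..n} \<and> card A = k \<longrightarrow>
          (\<forall>t\<in>tuple_on A Nd. fD A t \<in> {1..N}) \<and>
          (\<forall>m\<in>{1..N}. fD A (restr A (\<lambda>i. fE i m)) = m)"
    and rep: "\<forall>j\<in>{1..n}. \<forall>A. A \<subseteq> {1..n} - {j} \<and> card A = d \<longrightarrow>
          (\<forall>i\<in>A. \<forall>x\<in>{1..Nd}. FE i A j x \<in> {1..K}) \<and>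
          (\<forall>t\<in>tuple_on A K. FD j A t \<in> {1..Nd}) \<and>
          (\<forall>m\<in>{1..N}. FD j A (restr A (\<lambda>i. FE i A j (fE i m))) = fE j m)"
    using assms unfolding ER_code_def by (elim conjE exE) (rule that)
  have "ER_scheme n k d N Nd K fE FE"
  proof
    fix A m m' assume "A \<subseteq> {1..n}" "card A = k" "m \<in> {1..N}" "m' \<in> {1..N}"
      and "\<And>i. i \<in> A \<Longrightarrow> fE i m = fE i m'"
    moreover from this have "restr A (\<lambda>i. fE i m) = restr A (\<lambda>i. fE i m')"
      by (simp add: restr_eq_iff)
    ultimately show "m = m'" using dec by metis
  next
    fix j A m m' assume "j \<in> {1..n}" "A \<subseteq> {1..n} - {j}" "card A = d" "m \<in> {1..N}" "m' \<in> {1..N}"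
      and "\<And>i. i \<in> A \<Longrightarrow> FE i A j (fE i m) = FE i A j (fE i m')"
    moreover from this have "restr A (\<lambda>i. FE i A j (fE i m)) = restr A (\<lambda>i. FE i A j (fE i m'))"
      by (simp add: restr_eq_iff)
    ultimately show "fE j m = fE j m'" using rep by metis
  qed (use enc rep in blast)+
  with bounds show thesis by (rule that)
qed

lemma ER_code_if_scheme:
  assumes scheme: "ER_scheme n k d N Nd K fE FE" and bounds: "1 \<le> N" "1 \<le> Nd" "1 \<le> K"
  shows "ER_code n k d N Nd K"
proof -
  have dec: "\<forall>m\<in>{1..N}. \<forall>m'\<in>{1..N}.
      restr A (\<lambda>i. fE i m) = restr A (\<lambda>i. fE i m') \<longrightarrow> m = m'"
    if "A \<subseteq> {1..n}" "card A = k" for A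
    unfolding restr_eq_iff using ER_scheme.decode[OF scheme that] by blast
  have rep: "\<forall>m\<in>{1..N}. \<forall>m'\<in>{1..N}.
      restr A (\<lambda>i. FE i A j (fE i m)) = restr A (\<lambda>i. FE i A j (fE i m')) \<longrightarrow> fE j m = fE j m'"
    if "j \<in> {1..n}" "A \<subseteq> {1..n} - {j}" "card A = d" for j A
    unfolding restr_eq_iff using ER_scheme.repair[OF scheme that] by blast
  define fD where "fD A = factor_map {1..N} (\<lambda>m. restr A (\<lambda>i. fE i m)) (\<lambda>m. m) 1" for A
  define FD where
    "FD j A = factor_map {1..N} (\<lambda>m. restr A (\<lambda>i. FE i A j (fE i m))) (fE j) 1" for j A
  show "ER_code n k d N Nd K"
    unfolding ER_code_def
  proof (intro conjI exI[of _ fE] exI[of _ fD] exI[of _ FE] exI[of _ FD] allI impI ballI)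
    fix A t
    show "fD A t \<in> {1..N}"
      unfolding fD_def using bounds by (intro factor_map_in) auto
  next
    fix A m assume "A \<subseteq> {1..n} \<and> card A = k" "m \<in> {1..N}"
    then show "fD A (restr A (\<lambda>i. fE i m)) = m"
      unfolding fD_def using factor_map_eq[OF dec] by simp
  next
    fix j A t assume "j \<in> {1..n}"
    then show "FD j A t \<in> {1..Nd}"
      using ER_scheme.encode_range[OF scheme] bounds unfolding FD_def by (intro factor_map_in) auto
  next
    fix j A m assume "j \<in> {1..n}" "A \<subseteq> {1..n} - {j} \<and> card A = d" "m \<in> {1..N}"
    then show "FD j A (restr A (\<lambda>i. FE i A j (fE i m))) = fE j m"
      unfolding FD_def using factor_map_eq[OF rep] by simp
  qed (use bounds ER_scheme.encode_range[OF scheme] ER_scheme.repair_range[OF scheme] in auto)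
qed

lemma ex_inj_on_atLeastAtMost:
  assumes "finite Y" and "card Y \<le> B"
  shows "\<exists>\<psi> :: 'a \<Rightarrow> nat. inj_on \<psi> Y \<and> \<psi> ` Y \<subseteq> {1..B}"
proof -
  obtain h where "bij_betw h {1..card Y} Y"
    using ex_bij_betw_nat_finite_1[OF assms(1)] by blast
  then have "bij_betw (inv_into {1..card Y} h) Y {1..card Y}"
    by (rule bij_betw_inv_into)
  then show ?thesis
    using assms(2) unfolding bij_betw_def by (intro exI[of _ "inv_into {1..card Y} h"]) auto
qed

lemma ER_code_from_determining_maps:
  fixes X :: "'m set" and c :: "nat \<Rightarrow> 'm \<Rightarrow> 'y" and R :: "nat \<Rightarrow> nat set \<Rightarrow> nat \<Rightarrow> 'y \<Rightarrow> 'z"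
  assumes X: "finite X" "card X = N" "1 \<le> N" and bounds: "1 \<le> Nd" "1 \<le> K"
    and card_c: "\<And>i. i \<in> {1..n} \<Longrightarrow> card (c i ` X) \<le> Nd"
    and card_R: "\<And>j A i. \<lbrakk>j \<in> {1..n}; A \<subseteq> {1..n} - {j}; card A = d; i \<in> A\<rbrakk>
        \<Longrightarrow> card (R i A j ` c i ` X) \<le> K"
    and decode: "\<And>A m m'. \<lbrakk>A \<subseteq> {1..n}; card A = k; m \<in> X; m' \<in> X;
        \<And>i. i \<in> A \<Longrightarrow> c i m = c i m'\<rbrakk> \<Longrightarrow> m = m'"
    and repair: "\<And>j A m m'. \<lbrakk>j \<in> {1..n}; A \<subseteq> {1..n} - {j}; card A = d; m \<in> X; m' \<in> X;
        \<And>i. i \<in> A \<Longrightarrow> R i A j (c i m) = R i A j (c i m')\<rbrakk> \<Longrightarrow> c j m = c j m'"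
  shows "ER_code n k d N Nd K"
proof -
  obtain \<phi> where \<phi>: "bij_betw \<phi> {1..N} X"
    using ex_bij_betw_nat_finite_1[OF X(1)] X(2) by blast
  then have \<phi>X: "\<phi> m \<in> X" if "m \<in> {1..N}" for m
    using that by (auto simp: bij_betw_def)
  define \<psi> where "\<psi> i = (SOME \<psi>. inj_on \<psi> (c i ` X) \<and> \<psi> ` c i ` X \<subseteq> {1..Nd})" for i
  have \<psi>: "inj_on (\<psi> i) (c i ` X) \<and> \<psi> i ` c i ` X \<subseteq> {1..Nd}" if "i \<in> {1..n}" for i
    unfolding \<psi>_def
    using ex_inj_on_atLeastAtMost[OF finite_imageI[OF X(1)] card_c[OF that]] by (rule someI_ex)
  define ch where
    "ch i A j = (SOME ch. inj_on ch (R i A j ` c i ` X) \<and> ch ` R i A j ` c i ` X \<subseteq> {1..K})" for i A j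
  have ch: "inj_on (ch i A j) (R i A j ` c i ` X) \<and> ch i A j ` R i A j ` c i ` X \<subseteq> {1..K}"
    if "j \<in> {1..n}" "A \<subseteq> {1..n} - {j}" "card A = d" "i \<in> A" for i A j
    unfolding ch_def using ex_inj_on_atLeastAtMost[OF finite_imageI[OF finite_imageI[OF X(1)]] card_R[OF that]]
    by (rule someI_ex)
  define fE where "fE i m = \<psi> i (c i (\<phi> m))" for i m
  define rep_msg where "rep_msg i A j m = ch i A j (R i A j (c i (\<phi> m)))" for i A j m
  define FE where "FE i A j = factor_map {1..N} (fE i) (rep_msg i A j) 1" for i A j
  have fE_eqD: "c i (\<phi> m) = c i (\<phi> m')"
    if "i \<in> {1..n}" "m \<in> {1..N}" "m' \<in> {1..N}" "fE i m = fE i m'" for i m m'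
    using \<psi>[OF that(1)] \<phi>X that(2-4) unfolding fE_def by (meson image_eqI inj_onD)
  have FE_fE: "FE i A j (fE i m) = rep_msg i A j m" if "i \<in> {1..n}" "m \<in> {1..N}" for i A j m
    unfolding FE_def
  proof (rule factor_map_eq[OF _ that(2)], intro ballI impI)
    fix x x' assume "x \<in> {1..N}" "x' \<in> {1..N}" "fE i x = fE i x'"
    then have "c i (\<phi> x) = c i (\<phi> x')" by (rule fE_eqD[OF that(1)])
    then show "rep_msg i A j x = rep_msg i A j x'" unfolding rep_msg_def by simp
  qed
  have "ER_scheme n k d N Nd K fE FE"
  proof
    fix i m assume "i \<in> {1..n}" "m \<in> {1..N}"
    then show "fE i m \<in> {1..Nd}" using \<psi> \<phi>X unfolding fE_def by blast
  next
    fix A m m' assume A: "A \<subseteq> {1..n}" "card A = k" and m: "m \<in> {1..N}" "m' \<in> {1..N}"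
      and eq: "\<And>i. i \<in> A \<Longrightarrow> fE i m = fE i m'"
    have "\<phi> m = \<phi> m'"
      using A \<phi>X[OF m(1)] \<phi>X[OF m(2)] by (rule decode) (use A m eq fE_eqD in blast)
    then show "m = m'" using \<phi> m unfolding bij_betw_def by (meson inj_onD)
  next
    fix j A i x assume "j \<in> {1..n}" "A \<subseteq> {1..n} - {j}" "card A = d" "i \<in> A"
    then have "rep_msg i A j ` {1..N} \<subseteq> {1..K}"
      using ch \<phi>X unfolding rep_msg_def image_subset_iff by blast
    then show "FE i A j x \<in> {1..K}"
      unfolding FE_def using bounds(2) by (intro factor_map_in) auto
  next
    fix j A m m' assume jA: "j \<in> {1..n}" "A \<subseteq> {1..n} - {j}" "card A = d"
      and m: "m \<in> {1..N}" "m' \<in> {1..N}"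
      and eq: "\<And>i. i \<in> A \<Longrightarrow> FE i A j (fE i m) = FE i A j (fE i m')"
    have "R i A j (c i (\<phi> m)) = R i A j (c i (\<phi> m'))" if "i \<in> A" for i
    proof -
      have "i \<in> {1..n}" using that jA(2) by blast
      then have "ch i A j (R i A j (c i (\<phi> m))) = ch i A j (R i A j (c i (\<phi> m')))"
        using eq[OF that] FE_fE m unfolding rep_msg_def by metis
      then show ?thesis
        using ch[OF jA that] \<phi>X m by (meson image_eqI inj_onD)
    qed
    then have "c j (\<phi> m) = c j (\<phi> m')"
      using jA \<phi>X[OF m(1)] \<phi>X[OF m(2)] by (intro repair) auto
    then show "fE j m = fE j m'" unfolding fE_def by simp
  qed
  then show ?thesis
    using X(3) bounds by (rule ER_code_if_scheme)
qed

section \<open>The cut-set bound\<close>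

lemma card_image_le_if_determined:
  assumes "finite A" and "\<And>x y. \<lbrakk>x \<in> A; y \<in> A; g x = g y\<rbrakk> \<Longrightarrow> f x = f y"
  shows "card (f ` A) \<le> card (g ` A)"
proof -
  have "f ` A = (\<lambda>z. f (inv_into A g z)) ` g ` A"
  proof (rule set_eqI)
    fix y
    have "f (inv_into A g (g x)) = f x" if "x \<in> A" for x
      using that by (intro assms(2) inv_into_into f_inv_into_f) auto
    then show "y \<in> f ` A \<longleftrightarrow> y \<in> (\<lambda>z. f (inv_into A g z)) ` g ` A"
      by (auto simp: image_iff)
  qed
  then show ?thesis
    using assms(1) by (metis card_image_le finite_imageI)
qed

lemma card_image_pair_le:
  assumes "finite X" and "\<And>v. card (h ` {x \<in> X. g x = v}) \<le> B"
  shows "card ((\<lambda>x. (g x, h x)) ` X) \<le> card (g ` X) * B"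
proof -
  have "(\<lambda>x. (g x, h x)) ` X = (SIGMA v : g ` X. h ` {x \<in> X. g x = v})"
    by (auto simp: image_iff) metis
  then have "card ((\<lambda>x. (g x, h x)) ` X) = (\<Sum>v\<in>g ` X. card (h ` {x \<in> X. g x = v}))"
    using assms(1) by simp
  also have "\<dots> \<le> card (g ` X) * B"
    using sum_bounded_above[of "g ` X" _ B] assms(2) by simp
  finally show ?thesis .
qed

context ER_scheme
begin

definition prefix :: "nat \<Rightarrow> nat \<Rightarrow> nat \<Rightarrow> nat" where
  "prefix l m = restrict (\<lambda>i. fE i m) {1..l}"

text \<open>Node \<open>l + 1\<close> is repaired from the helpers \<open>{1..d + 1} - {l + 1}\<close>; once the first \<open>l\<close>
  nodes are known, only the \<open>d - l\<close> messages of the remaining helpers are unknown.\<close>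

lemma card_next_symbol_le:
  assumes "l < k" "k \<le> d" "d < n"
  shows "card (fE (Suc l) ` {m \<in> {1..N}. prefix l m = v}) \<le> min Nd (K ^ (d - l))"
proof -
  define j where "j = Suc l"
  define H where "H = {1..d + 1} - {j}"
  define F where "F = {m \<in> {1..N}. prefix l m = v}"
  define \<rho> where "\<rho> m = restrict (\<lambda>i. FE i H j (fE i m)) {l + 2..d + 1}" for m
  have j: "j \<in> {1..n}" and H: "H \<subseteq> {1..n} - {j}" "card H = d"
    using assms unfolding j_def H_def by auto
  have "\<rho> ` F \<subseteq> PiE {l + 2..d + 1} (\<lambda>_. {1..K})"
  proof (rule image_subsetI)
    fix m assume "m \<in> F"
    have "FE i H j (fE i m) \<in> {1..K}" if "i \<in> {l + 2..d + 1}" for i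
    proof -
      have "i \<in> H" using that unfolding H_def j_def by auto
      moreover have "fE i m \<in> {1..Nd}"
        using encode_range \<open>m \<in> F\<close> \<open>i \<in> H\<close> H(1) unfolding F_def by blast
      ultimately show ?thesis using repair_range[OF j H(1) H(2)] by blast
    qed
    then show "\<rho> m \<in> PiE {l + 2..d + 1} (\<lambda>_. {1..K})"
      unfolding \<rho>_def restrict_PiE_iff by blast
  qed
  then have "card (\<rho> ` F) \<le> card (PiE {l + 2..d + 1} (\<lambda>_. {1..K}))"
    by (intro card_mono finite_PiE) auto
  also have "\<dots> = K ^ (d - l)"
    using assms by (simp add: card_PiE)
  finally have card_\<rho>: "card (\<rho> ` F) \<le> K ^ (d - l)" .
  have "fE j ` F \<subseteq> {1..Nd}"
    using encode_range j unfolding F_def by blast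
  then have "card (fE j ` F) \<le> Nd"
    using card_mono[of "{1..Nd}"] by fastforce
  moreover have "card (fE j ` F) \<le> card (\<rho> ` F)"
  proof (rule card_image_le_if_determined)
    fix m m' assume m: "m \<in> F" "m' \<in> F" and "\<rho> m = \<rho> m'"
    have "FE i H j (fE i m) = FE i H j (fE i m')" if "i \<in> H" for i
    proof (cases "i \<le> l")
      case True
      moreover have "prefix l m i = prefix l m' i" using m unfolding F_def by simp
      ultimately show ?thesis using that unfolding prefix_def H_def by auto
    next
      case False
      then have "i \<in> {l + 2..d + 1}" using that unfolding H_def j_def by auto
      then show ?thesis using fun_cong[OF \<open>\<rho> m = \<rho> m'\<close>, of i] unfolding \<rho>_def by simp
    qed
    then show "fE j m = fE j m'"
      using j H m unfolding F_def by (intro repair) auto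
  qed (simp add: F_def)
  ultimately show ?thesis
    using card_\<rho> unfolding F_def j_def by linarith
qed

lemma card_prefix_le:
  assumes "l \<le> k" "k \<le> d" "d < n"
  shows "card (prefix l ` {1..N}) \<le> (\<Prod>i<l. min Nd (K ^ (d - i)))"
  using assms(1)
proof (induction l)
  case 0
  have "prefix 0 ` {1..N} \<subseteq> {\<lambda>_. undefined}"
    unfolding prefix_def by auto
  then have "card (prefix 0 ` {1..N}) \<le> card {\<lambda>_::nat. undefined :: nat}"
    by (intro card_mono) auto
  then show ?case by simp
next
  case (Suc l)
  have "card (prefix (Suc l) ` {1..N}) \<le> card ((\<lambda>m. (prefix l m, fE (Suc l) m)) ` {1..N})"
  proof (rule card_image_le_if_determined)
    fix m m' assume "(prefix l m, fE (Suc l) m) = (prefix l m', fE (Suc l) m')"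
    then show "prefix (Suc l) m = prefix (Suc l) m'"
      unfolding prefix_def fun_eq_iff by (metis atLeastAtMost_iff le_Suc_eq prod.inject restrict_apply)
  qed simp
  also have "\<dots> \<le> card (prefix l ` {1..N}) * min Nd (K ^ (d - l))"
    using card_next_symbol_le Suc.prems assms by (intro card_image_pair_le) auto
  also have "\<dots> \<le> (\<Prod>i<Suc l. min Nd (K ^ (d - i)))"
    using Suc by simp
  finally show ?case .
qed

theorem cutset_bound:
  assumes "k \<le> d" "d < n"
  shows "N \<le> (\<Prod>l<k. min Nd (K ^ (d - l)))"
proof -
  have "inj_on (prefix k) {1..N}"
  proof (rule inj_onI)
    fix m m' assume m: "m \<in> {1..N}" "m' \<in> {1..N}" and "prefix k m = prefix k m'"
    have "fE i m = fE i m'" if "i \<in> {1..k}" for i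
      using that \<open>prefix k m = prefix k m'\<close> unfolding prefix_def by (metis restrict_apply')
    then show "m = m'"
      by (rule decode[of "{1..k}", rotated -1]) (use assms m in auto)
  qed
  then have "N = card (prefix k ` {1..N})"
    by (simp add: card_image)
  also have "\<dots> \<le> (\<Prod>l<k. min Nd (K ^ (d - l)))"
    using card_prefix_le assms by blast
  finally show ?thesis .
qed

end

lemma ER_code_cutset_ln:
  assumes "ER_code n k d N Nd K" "k \<le> d" "d < n"
  shows "ln N / ln K \<le> (\<Sum>l<k. min (ln Nd / ln K) (real (d - l)))"
proof (cases "K = 1")
  case True
  then show ?thesis by simp
next
  case False
  obtain fE FE where bounds: "1 \<le> N" "1 \<le> Nd" "1 \<le> K"
    and "ER_scheme n k d N Nd K fE FE"
    using assms(1) by (rule ER_code_obtain_scheme)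
  then have "N \<le> (\<Prod>l<k. min Nd (K ^ (d - l)))"
    using ER_scheme.cutset_bound assms(2,3) by blast
  then have "real N \<le> real (\<Prod>l<k. min Nd (K ^ (d - l)))"
    by (simp only: of_nat_le_iff)
  also have "\<dots> = (\<Prod>l<k. min (real Nd) (real K ^ (d - l)))"
    by (simp add: of_nat_min)
  finally have "real N \<le> (\<Prod>l<k. min (real Nd) (real K ^ (d - l)))" .
  then have "ln N \<le> ln (\<Prod>l<k. min (real Nd) (real K ^ (d - l)))"
    using bounds by (subst ln_le_cancel_iff) (auto intro: prod_pos)
  also have "\<dots> = (\<Sum>l<k. ln (min (real Nd) (real K ^ (d - l))))"
    using bounds by (intro ln_prod) (auto simp: min_def)
  also have "\<dots> = (\<Sum>l<k. min (ln Nd) (real (d - l) * ln K))"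
  proof (rule sum.cong[OF refl])
    fix l
    have "ln (min a b) = min (ln a) (ln b)" if "0 < a" "0 < b" for a b :: real
      using that by (auto simp: min_def)
    then show "ln (min (real Nd) (real K ^ (d - l))) = min (ln Nd) (real (d - l) * ln K)"
      using bounds by (simp add: ln_realpow)
  qed
  finally have "ln N / ln K \<le> (\<Sum>l<k. min (ln Nd) (real (d - l) * ln K)) / ln K"
    using bounds by (simp add: divide_right_mono)
  also have "\<dots> = (\<Sum>l<k. min (ln Nd / ln K) (real (d - l)))"
    using bounds False unfolding sum_divide_distrib
    by (intro sum.cong refl) (simp add: min_divide_distrib_right)
  finally show ?thesis .
qed

lemma achievable_cutset:
  assumes "achievable n k d \<alpha> M" "k \<le> d" "d < n"
  shows "M \<le> (\<Sum>l<k. min \<alpha> (real (d - l)))"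
proof (rule field_le_epsilon)
  fix e :: real assume "e > 0"
  define \<epsilon> where "\<epsilon> = e / (real k + 1)"
  have "\<epsilon> > 0" unfolding \<epsilon>_def using \<open>e > 0\<close> by simp
  then obtain N Nd K where code: "ER_code n k d N Nd K"
    and \<alpha>: "ln Nd / ln K \<le> \<alpha> + \<epsilon>" and M: "M - \<epsilon> \<le> ln N / ln K"
    using assms(1) unfolding achievable_def by blast
  have "M - \<epsilon> \<le> (\<Sum>l<k. min (ln Nd / ln K) (real (d - l)))"
    using M ER_code_cutset_ln[OF code assms(2,3)] by linarith
  also have "\<dots> \<le> (\<Sum>l<k. min \<alpha> (real (d - l)) + \<epsilon>)"
    using \<alpha> \<open>\<epsilon> > 0\<close> by (intro sum_mono) auto
  also have "\<dots> = (\<Sum>l<k. min \<alpha> (real (d - l))) + real k * \<epsilon>"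
    by (simp add: sum.distrib)
  finally have "M \<le> (\<Sum>l<k. min \<alpha> (real (d - l))) + (real k + 1) * \<epsilon>"
    by (simp add: algebra_simps)
  then show "M \<le> (\<Sum>l<k. min \<alpha> (real (d - l))) + e"
    unfolding \<epsilon>_def by simp
qed

lemma square_le_excess_sum:
  fixes \<beta> :: real
  assumes "0 \<le> \<beta>" "\<beta> \<le> real n"
  shows "\<beta>\<^sup>2 \<le> 2 * (\<Sum>l<n. \<beta> - min \<beta> (real (n - l))) + \<beta>"
  using assms
proof (induction n arbitrary: \<beta>)
  case 0
  then show ?case by simp
next
  case (Suc n)
  show ?case
  proof (cases "\<beta> \<le> 1")
    case True
    have "\<beta>\<^sup>2 \<le> \<beta>" using True Suc.prems by (simp add: power2_eq_square mult_left_le)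
    moreover have "0 \<le> (\<Sum>l<Suc n. \<beta> - min \<beta> (real (Suc n - l)))" by (intro sum_nonneg) simp
    ultimately show ?thesis by linarith
  next
    case False
    have shift: "\<beta> - min \<beta> (real (Suc n - l)) = (\<beta> - 1) - min (\<beta> - 1) (real (n - l))" if "l < n" for l
      using that by (simp add: of_nat_diff Suc_diff_le)
    have "(\<beta> - 1)\<^sup>2 \<le> 2 * (\<Sum>l<n. (\<beta> - 1) - min (\<beta> - 1) (real (n - l))) + (\<beta> - 1)"
      using False Suc.prems by (intro Suc.IH) auto
    also have "(\<Sum>l<n. (\<beta> - 1) - min (\<beta> - 1) (real (n - l))) = (\<Sum>l<n. \<beta> - min \<beta> (real (Suc n - l)))"
      by (rule sum.cong[OF refl]) (metis lessThan_iff shift)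
    finally show ?thesis
      using False by (simp add: power2_eq_square algebra_simps)
  qed
qed

text \<open>With \<open>\<beta> = min \<alpha> n\<close>, the cut-set sum is at most \<open>n \<beta>\<close>, while the slack \<open>n \<alpha> - M\<close> is at
  least the excess sum of \<open>square_le_excess_sum\<close>, i.e. of order \<open>\<beta>\<^sup>2\<close>.\<close>

lemma cutset_sum_bounds:
  fixes \<alpha> M :: real
  assumes cut: "M \<le> (\<Sum>l<k. min \<alpha> (real (d - l)))" and "k < n" "d \<le> n" "0 < M"
  shows "M \<le> real n * (real n * \<alpha> - M)" and "M \<le> (real n)\<^sup>2"
    and "M\<^sup>2 \<le> 3 * (real n)\<^sup>2 * (real n * \<alpha> - M)"
proof -
  define \<beta> where "\<beta> = min \<alpha> (real n)"
  define s where "s = real n * \<alpha> - M"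
  have "(\<Sum>l<k. min \<alpha> (real (d - l))) \<le> real k * \<beta>"
    using sum_bounded_above[of "{..<k}" "\<lambda>l. min \<alpha> (real (d - l))" \<beta>] \<open>d \<le> n\<close>
    unfolding \<beta>_def by (simp add: min.coboundedI2)
  with cut have M_k: "M \<le> real k * \<beta>" by linarith
  with \<open>0 < M\<close> have "0 < \<beta>"
    by (metis mult_nonneg_nonpos not_le of_nat_0_le_iff order.strict_trans2)
  then have "0 < \<alpha>" unfolding \<beta>_def by simp
  have M_n: "M \<le> real n * \<beta>"
    using M_k \<open>0 < \<beta>\<close> \<open>k < n\<close> by (smt (verit) mult_right_mono of_nat_less_iff)
  have "\<beta> \<le> s"
  proof -
    have "\<beta> \<le> real (n - k) * \<alpha>"
      using \<open>0 < \<alpha>\<close> \<open>k < n\<close> unfolding \<beta>_def by (simp add: min.coboundedI1 mult_le_cancel_right1)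
    also have "\<dots> \<le> s"
    proof -
      have "real k * \<beta> \<le> real k * \<alpha>"
        unfolding \<beta>_def by (simp add: mult_left_mono)
      then show ?thesis
        using M_k \<open>k < n\<close> unfolding s_def by (simp add: of_nat_diff left_diff_distrib)
    qed
    finally show ?thesis .
  qed
  have "(\<Sum>l<n. \<beta> - min \<beta> (real (n - l))) \<le> s"
  proof -
    have "(\<Sum>l<n. \<beta> - min \<beta> (real (n - l))) \<le> (\<Sum>l<n. \<alpha> - min \<alpha> (real (n - l)))"
      unfolding \<beta>_def by (intro sum_mono) (auto simp: min_def)
    also have "\<dots> = real n * \<alpha> - (\<Sum>l<n. min \<alpha> (real (n - l)))"
      by (simp add: sum_subtractf)
    finally have excess: "(\<Sum>l<n. \<beta> - min \<beta> (real (n - l)))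
        \<le> real n * \<alpha> - (\<Sum>l<n. min \<alpha> (real (n - l)))" .
    have "(\<Sum>l<k. min \<alpha> (real (d - l))) \<le> (\<Sum>l<k. min \<alpha> (real (n - l)))"
      using \<open>d \<le> n\<close> by (intro sum_mono) (simp add: min.coboundedI2)
    also have "\<dots> \<le> (\<Sum>l<n. min \<alpha> (real (n - l)))"
      using \<open>k < n\<close> \<open>0 < \<alpha>\<close> by (intro sum_mono2) auto
    finally show ?thesis
      using cut excess unfolding s_def by linarith
  qed
  then have "\<beta>\<^sup>2 \<le> 3 * s"
    using square_le_excess_sum[of \<beta> n] \<open>0 < \<beta>\<close> \<open>\<beta> \<le> s\<close> unfolding \<beta>_def by simp
  show "M \<le> real n * s"
    using M_n \<open>\<beta> \<le> s\<close> by (smt (verit) mult_left_mono of_nat_0_le_iff)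
  show "M \<le> (real n)\<^sup>2"
    using M_n unfolding \<beta>_def power2_eq_square by (smt (verit) mult_left_mono of_nat_0_le_iff)
  have "M\<^sup>2 \<le> (real n * \<beta>)\<^sup>2"
    using M_n \<open>0 < M\<close> by (intro power_mono) auto
  also have "\<dots> \<le> 3 * (real n)\<^sup>2 * s"
    using mult_left_mono[OF \<open>\<beta>\<^sup>2 \<le> 3 * s\<close>, of "(real n)\<^sup>2"] by (simp add: power_mult_distrib)
  finally show "M\<^sup>2 \<le> 3 * (real n)\<^sup>2 * s" .
qed

lemma Eset_point_bounds:
  assumes "1 \<le> \<tau>2" "\<tau>2 \<le> \<tau>1" "\<tau>1 < n" and "(Er, Ed) \<in> Eset \<tau>1 \<tau>2 n"
  shows "Ed \<le> Er + 1" and "Ed \<le> 2" and "2 * Ed \<le> 2 + Er + ln 3 / ln n"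
proof -
  obtain \<alpha> M where E: "Er = ln (real n * \<alpha> - M) / ln n" "Ed = ln M / ln n"
    and ach: "achievable n (n - \<tau>1) (n - \<tau>2) \<alpha> M" and s: "real n * \<alpha> - M > 0" and "M > 0"
    using assms(4) unfolding Eset_def by auto
  define s where "s = real n * \<alpha> - M"
  have cut: "M \<le> (\<Sum>l<n - \<tau>1. min \<alpha> (real (n - \<tau>2 - l)))"
    using assms(1-3) by (intro achievable_cutset[OF ach]) auto
  have "n - \<tau>1 < n" "n - \<tau>2 \<le> n" using assms(1-3) by auto
  note bounds = cutset_sum_bounds[OF cut this \<open>M > 0\<close>, folded s_def]
  have "s > 0" "real n > 1" "ln n > 0" using s assms(1-3) unfolding s_def by auto
  have "ln M \<le> ln (real n * s)"
    using bounds(1) \<open>M > 0\<close> by simp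
  then have "ln M \<le> ln n + ln s"
    using \<open>s > 0\<close> \<open>real n > 1\<close> by (simp add: ln_mult)
  then show "Ed \<le> Er + 1"
    using \<open>ln n > 0\<close> unfolding E s_def[symmetric] by (simp add: field_simps)
  have "ln M \<le> ln ((real n)\<^sup>2)"
    using bounds(2) \<open>M > 0\<close> \<open>real n > 1\<close> by simp
  then have "ln M \<le> 2 * ln n"
    using \<open>real n > 1\<close> by (simp add: ln_realpow)
  then show "Ed \<le> 2"
    using \<open>ln n > 0\<close> unfolding E by (simp add: field_simps)
  have "ln (M\<^sup>2) \<le> ln (3 * (real n)\<^sup>2 * s)"
    using bounds(3) \<open>M > 0\<close> \<open>s > 0\<close> \<open>real n > 1\<close> by simp
  then have "2 * ln M \<le> ln 3 + 2 * ln n + ln s"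
    using \<open>M > 0\<close> \<open>s > 0\<close> \<open>real n > 1\<close> by (simp add: ln_mult ln_realpow)
  then show "2 * Ed \<le> 2 + Er + ln 3 / ln n"
    using \<open>ln n > 0\<close> unfolding E s_def[symmetric] by (simp add: field_simps)
qed

lemma closed_Estar: "closed Estar"
proof -
  have Estar_eq: "Estar = {p. snd p \<le> fst p + 1} \<inter> {p. 2 * snd p \<le> 2 + fst p} \<inter> {p. snd p \<le> 2}"
    unfolding Estar_def by auto
  show ?thesis
    unfolding Estar_eq by (intro closed_Int closed_Collect_le continuous_intros)
qed

lemma filterlim_ln_real_sequentially: "filterlim (\<lambda>n. ln (real n)) at_top sequentially"
  by (rule filterlim_compose[OF ln_at_top filterlim_real_sequentially])

lemma limsup_Eset_subset_Estar:
  assumes "1 \<le> \<tau>2" "\<tau>2 \<le> \<tau>1"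
  shows "limsup_sets \<tau>1 (Eset \<tau>1 \<tau>2) \<subseteq> Estar"
proof
  fix p assume "p \<in> limsup_sets \<tau>1 (Eset \<tau>1 \<tau>2)"
  then obtain nj :: "nat \<Rightarrow> nat" and x :: "nat \<Rightarrow> real \<times> real"
    where x: "\<And>j. \<tau>1 < nj j \<and> x j \<in> Eset \<tau>1 \<tau>2 (nj j)"
      and nj: "filterlim nj at_top sequentially" and "x \<longlonglongrightarrow> p"
    unfolding limsup_sets_def by blast
  have pts: "snd (x j) \<le> fst (x j) + 1 \<and> snd (x j) \<le> 2 \<and>
      2 * snd (x j) \<le> 2 + fst (x j) + ln 3 / ln (nj j)" for j
    using Eset_point_bounds[OF assms, of "nj j" "fst (x j)" "snd (x j)"] x[of j] by simp
  have fst: "(\<lambda>j. fst (x j)) \<longlonglongrightarrow> fst p" and snd: "(\<lambda>j. snd (x j)) \<longlonglongrightarrow> snd p"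
    using \<open>x \<longlonglongrightarrow> p\<close> by (auto intro: tendsto_fst tendsto_snd)
  have "filterlim (\<lambda>j. ln (real (nj j))) at_top sequentially"
    by (rule filterlim_compose[OF filterlim_ln_real_sequentially nj])
  then have "(\<lambda>j. ln 3 / ln (real (nj j))) \<longlonglongrightarrow> 0"
    by (rule tendsto_divide_0[OF tendsto_const filterlim_at_top_imp_at_infinity])
  have "snd p \<le> fst p + 1"
    using pts by (intro tendsto_le[OF _ tendsto_add[OF fst tendsto_const] snd]) auto
  moreover have "snd p \<le> 2"
    using pts by (intro tendsto_le[OF _ tendsto_const snd]) auto
  moreover have "2 * snd p \<le> 2 + fst p + 0"
    using pts
    by (intro tendsto_le[OF _ tendsto_add[OF tendsto_add[OF tendsto_const fst]
          \<open>(\<lambda>j. ln 3 / ln (real (nj j))) \<longlonglongrightarrow> 0\<close>] tendsto_mult[OF tendsto_const snd]]) auto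
  ultimately show "p \<in> Estar"
    unfolding Estar_def by (cases p) auto
qed

section \<open>Layered codes\<close>

lemma card_supersets_le:
  assumes "finite U" "F \<subseteq> U"
  shows "card {S. S \<subseteq> U \<and> card S = r \<and> F \<subseteq> S} \<le> (card U - card F) choose (r - card F)"
proof -
  have fin: "finite F" using assms finite_subset by blast
  have "card {S. S \<subseteq> U \<and> card S = r \<and> F \<subseteq> S} \<le> card {T. T \<subseteq> U - F \<and> card T = r - card F}"
  proof (rule card_inj_on_le)
    show "inj_on (\<lambda>S. S - F) {S. S \<subseteq> U \<and> card S = r \<and> F \<subseteq> S}"
      by (rule inj_onI) (metis (no_types, lifting) Diff_partition mem_Collect_eq)
    show "(\<lambda>S. S - F) ` {S. S \<subseteq> U \<and> card S = r \<and> F \<subseteq> S} \<subseteq> {T. T \<subseteq> U - F \<and> card T = r - card F}"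
      using fin by (auto simp: card_Diff_subset)
    show "finite {T. T \<subseteq> U - F \<and> card T = r - card F}"
      using assms(1) by simp
  qed
  also have "\<dots> = (card U - card F) choose (r - card F)"
    using assms by (simp add: n_subsets card_Diff_subset fin)
  finally show ?thesis .
qed

lemma card_Int_ge:
  assumes "finite U" "S \<subseteq> U" "A \<subseteq> U"
  shows "card S - (card U - card A) \<le> card (S \<inter> A)"
proof -
  have "S \<subseteq> (S \<inter> A) \<union> (U - A)" using assms by blast
  then have "card S \<le> card (S \<inter> A) + card (U - A)"
    using assms by (meson card_Un_le card_mono finite_Diff finite_Int finite_UnI finite_subset order_trans)
  also have "card (U - A) = card U - card A"
    using assms by (simp add: card_Diff_subset finite_subset)
  finally show ?thesis by linarith
qed

lemma coeffs_eq_if_values_eq: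
  fixes a a' :: "nat \<Rightarrow> nat"
  assumes "finite P" "\<kappa> \<le> card P"
    and "\<And>x. x \<in> P \<Longrightarrow> (\<Sum>t<\<kappa>. a t * x ^ t) = (\<Sum>t<\<kappa>. a' t * x ^ t)"
  shows "\<forall>t<\<kappa>. a t = a' t"
proof (cases "\<kappa> = 0")
  case False
  define p :: "real poly" where "p = (\<Sum>t<\<kappa>. monom (real (a t)) t)"
  define p' :: "real poly" where "p' = (\<Sum>t<\<kappa>. monom (real (a' t)) t)"
  have "degree p \<le> \<kappa> - 1" "degree p' \<le> \<kappa> - 1"
    unfolding p_def p'_def
    by (auto intro!: degree_sum_le order.trans[OF degree_monom_le])
  then have "degree p < card (real ` P)" "degree p' < card (real ` P)"
    using assms(2) False by (simp_all add: card_image)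
  moreover have "poly p (real x) = poly p' (real x)" if "x \<in> P" for x
  proof -
    have "poly p (real x) = real (\<Sum>t<\<kappa>. a t * x ^ t)"
      and "poly p' (real x) = real (\<Sum>t<\<kappa>. a' t * x ^ t)"
      unfolding p_def p'_def by (simp_all add: poly_sum poly_monom)
    then show ?thesis using assms(3)[OF that] by simp
  qed
  ultimately have "p = p'"
    by (intro poly_eqI_degree[of "real ` P"]) auto
  moreover have "coeff p t = real (a t)" "coeff p' t = real (a' t)" if "t < \<kappa>" for t
    unfolding p_def p'_def coeff_sum using that by (simp_all add: sum.delta)
  ultimately show ?thesis
    by (metis of_nat_eq_iff)
qed simp

definition layers :: "nat \<Rightarrow> nat \<Rightarrow> nat set set" where
  "layers n r = {S. S \<subseteq> {1..n} \<and> card S = r}"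

lemma finite_layers: "finite (layers n r)"
  unfolding layers_def by (rule finite_subset[of _ "Pow {1..n}"]) auto

lemma card_layers: "card (layers n r) = n choose r"
  unfolding layers_def using n_subsets[of "{1..n}" r] by simp

lemma card_layers_containing:
  assumes "F \<subseteq> {1..n}"
  shows "card {S \<in> layers n r. F \<subseteq> S} \<le> (n - card F) choose (r - card F)"
  using card_supersets_le[OF _ assms, of r] unfolding layers_def by (simp add: conj_assoc)

lemma card_le_power_if_subset_PiE:
  assumes "Y \<subseteq> PiE I (\<lambda>_. {..<P})" "card I \<le> e" "finite I" "1 \<le> P"
  shows "card Y \<le> P ^ e"
proof -
  have "card Y \<le> card (PiE I (\<lambda>_. {..<P}))"
    using assms(1,3) by (intro card_mono finite_PiE) auto
  also have "\<dots> = P ^ card I"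
    using assms(3) by (simp add: card_PiE)
  also have "\<dots> \<le> P ^ e"
    using assms(2,4) by (rule power_increasing)
  finally show ?thesis .
qed

definition layer_eval :: "nat \<Rightarrow> (nat set \<times> nat \<Rightarrow> nat) \<Rightarrow> nat set \<Rightarrow> nat \<Rightarrow> nat" where
  "layer_eval \<kappa> m S x = (\<Sum>t<\<kappa>. m (S, t) * x ^ t)"

lemma layer_eval_less:
  assumes "m \<in> PiE (L \<times> {..<\<kappa>}) (\<lambda>_. {..<q})" "S \<in> L" "x \<le> n" "1 \<le> n"
  shows "layer_eval \<kappa> m S x < q * \<kappa> * n ^ \<kappa> + 1"
proof -
  have "layer_eval \<kappa> m S x \<le> (\<Sum>t<\<kappa>. q * n ^ \<kappa>)"
    unfolding layer_eval_def
  proof (rule sum_mono)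
    fix t assume "t \<in> {..<\<kappa>}"
    then have "m (S, t) \<le> q" using assms(1,2) by (auto simp: PiE_iff less_imp_le)
    moreover have "x ^ t \<le> n ^ \<kappa>"
      using assms(3,4) \<open>t \<in> {..<\<kappa>}\<close> by (intro order.trans[OF power_mono power_increasing]) auto
    ultimately show "m (S, t) * x ^ t \<le> q * n ^ \<kappa>" by (rule mult_le_mono)
  qed
  then show ?thesis by (simp add: algebra_simps)
qed

text \<open>A node set \<open>A\<close> meets every layer in at least \<open>r - (n - card A)\<close> nodes.\<close>

lemma layer_eval_determined:
  assumes "S \<in> layers n r" "A \<subseteq> {1..n}" "\<kappa> \<le> r - (n - card A)"
    and "\<And>x. x \<in> S \<inter> A \<Longrightarrow> layer_eval \<kappa> m S x = layer_eval \<kappa> m' S x"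
  shows "\<forall>t<\<kappa>. m (S, t) = m' (S, t)"
proof (rule coeffs_eq_if_values_eq[of "S \<inter> A"])
  show "finite (S \<inter> A)" using assms(2) finite_subset by blast
  show "\<kappa> \<le> card (S \<inter> A)"
    using card_Int_ge[of "{1..n}" S A] assms(1-3) unfolding layers_def by simp
qed (use assms(4) in \<open>simp add: layer_eval_def\<close>)

text \<open>Layered code: for every layer \<open>S\<close> (an \<open>r\<close>-set of nodes) the message holds \<open>\<kappa> = r - \<tau>1\<close>
  digits \<open>< q\<close>, the coefficients of a polynomial \<open>f\<^sub>S\<close> of degree \<open>< \<kappa>\<close>, and node \<open>i\<close> stores
  \<open>f\<^sub>S(i)\<close> for all layers \<open>S \<ni> i\<close>. Any \<open>n - \<tau>1\<close> nodes meet a layer in at least \<open>\<kappa>\<close> points, which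
  determine \<open>f\<^sub>S\<close>; to repair node \<open>j\<close>, helper \<open>i\<close> sends \<open>f\<^sub>S(i)\<close> for the layers \<open>S \<supseteq> {i, j}\<close>.
  The exponent \<open>t\<close> only pads the repair alphabet.\<close>

lemma layered_ER_code:
  fixes n \<tau>1 \<tau>2 r q t :: nat
  defines "\<kappa> \<equiv> r - \<tau>1" and "P \<equiv> q * (r - \<tau>1) * n ^ (r - \<tau>1) + 1"
  assumes \<tau>: "1 \<le> \<tau>2" "\<tau>2 \<le> \<tau>1" and r: "\<tau>1 < r" "r \<le> n" and "1 \<le> q" "1 \<le> t"
  shows "ER_code n (n - \<tau>1) (n - \<tau>2) (q ^ ((n choose r) * \<kappa>))
    (P ^ ((n - 1) choose (r - 1))) (P ^ (((n - 2) choose (r - 2)) * t))"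
proof -
  define X where "X = PiE (layers n r \<times> {..<\<kappa>}) (\<lambda>_. {..<q})"
  define c where "c i m = restrict (\<lambda>S. layer_eval \<kappa> m S i) {S \<in> layers n r. i \<in> S}" for i m
  define R where "R i (A :: nat set) j y = restrict y {S \<in> layers n r. {i, j} \<subseteq> S}"
    for i A j and y :: "nat set \<Rightarrow> nat"
  have c_in: "c i ` X \<subseteq> PiE {S \<in> layers n r. i \<in> S} (\<lambda>_. {..<P})" if "i \<in> {1..n}" for i
    unfolding c_def P_def \<kappa>_def[symmetric] using layer_eval_less that r
    by (intro image_subsetI) (simp add: restrict_PiE_iff X_def)
  show ?thesis
  proof (rule ER_code_from_determining_maps[where X = X and c = c and R = R])
    show "finite X" unfolding X_def by (simp add: finite_PiE finite_layers)
    show "card X = q ^ ((n choose r) * \<kappa>)"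
      unfolding X_def by (simp add: card_PiE finite_layers card_cartesian_product card_layers)
    show "1 \<le> q ^ ((n choose r) * \<kappa>)" "1 \<le> P ^ ((n - 1) choose (r - 1))"
      "1 \<le> P ^ (((n - 2) choose (r - 2)) * t)"
      using \<open>1 \<le> q\<close> unfolding P_def by simp_all
  next
    fix i assume "i \<in> {1..n}"
    then show "card (c i ` X) \<le> P ^ ((n - 1) choose (r - 1))"
      using card_layers_containing[of "{i}" n r]
      by (intro card_le_power_if_subset_PiE[OF c_in]) (auto simp: finite_layers P_def)
  next
    fix j A i assume "j \<in> {1..n}" "A \<subseteq> {1..n} - {j}" "card A = n - \<tau>2" "i \<in> A"
    then have "i \<noteq> j" by blast
    with \<open>j \<in> {1..n}\<close> \<open>A \<subseteq> {1..n} - {j}\<close> \<open>i \<in> A\<close>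
    have ij: "{i, j} \<subseteq> {1..n}" "card {i, j} = 2" by auto
    have "R i A j ` c i ` X \<subseteq> PiE {S \<in> layers n r. {i, j} \<subseteq> S} (\<lambda>_. {..<P})"
      using c_in ij(1) unfolding R_def by (fastforce simp: PiE_iff)
    moreover have "card {S \<in> layers n r. {i, j} \<subseteq> S} \<le> ((n - 2) choose (r - 2)) * t"
      using card_layers_containing[OF ij(1), of r] ij(2) \<open>1 \<le> t\<close>
      by (auto intro: order.trans[OF _ mult_le_mono2[of 1 t]])
    ultimately show "card (R i A j ` c i ` X) \<le> P ^ (((n - 2) choose (r - 2)) * t)"
      by (rule card_le_power_if_subset_PiE) (auto simp: finite_layers P_def)
  next
    fix A m m' assume A: "A \<subseteq> {1..n}" "card A = n - \<tau>1" and "m \<in> X" "m' \<in> X"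
      and eq: "\<And>i. i \<in> A \<Longrightarrow> c i m = c i m'"
    show "m = m'"
    proof (rule PiE_ext[OF \<open>m \<in> X\<close>[unfolded X_def] \<open>m' \<in> X\<close>[unfolded X_def]])
      fix p assume "p \<in> layers n r \<times> {..<\<kappa>}"
      then obtain S t' where p: "p = (S, t')" "S \<in> layers n r" "t' < \<kappa>" by auto
      have "layer_eval \<kappa> m S x = layer_eval \<kappa> m' S x" if "x \<in> S \<inter> A" for x
        using fun_cong[OF eq[of x], of S] that p(2) unfolding c_def by simp
      then have "\<forall>t<\<kappa>. m (S, t) = m' (S, t)"
        using A r unfolding \<kappa>_def by (intro layer_eval_determined[OF p(2) A(1)]) auto
      then show "m p = m' p"
        using p by simp
    qed
  next
    fix j A m m' assume jA: "j \<in> {1..n}" "A \<subseteq> {1..n} - {j}" "card A = n - \<tau>2"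
      and "m \<in> X" "m' \<in> X" and eq: "\<And>i. i \<in> A \<Longrightarrow> R i A j (c i m) = R i A j (c i m')"
    show "c j m = c j m'"
      unfolding c_def
    proof (rule restrict_ext)
      fix S assume S: "S \<in> {S \<in> layers n r. j \<in> S}"
      have "layer_eval \<kappa> m S x = layer_eval \<kappa> m' S x" if "x \<in> S \<inter> A" for x
        using fun_cong[OF eq[of x], of S] that S unfolding R_def c_def by auto
      moreover have "A \<subseteq> {1..n}" using jA(2) by blast
      ultimately have "\<forall>t<\<kappa>. m (S, t) = m' (S, t)"
        using S jA(3) r \<tau> unfolding \<kappa>_def by (intro layer_eval_determined) auto
      then show "layer_eval \<kappa> m S j = layer_eval \<kappa> m' S j"
        unfolding layer_eval_def by simp
    qed
  qed
qed

lemma achievable_of_code_family: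
  fixes a c e D :: nat and P :: "nat \<Rightarrow> nat"
  assumes codes: "\<And>q. 1 \<le> q \<Longrightarrow> ER_code n k d (q ^ e) (P q ^ a) (P q ^ c)"
    and P: "\<And>q. 1 \<le> q \<Longrightarrow> 2 \<le> P q \<and> P q \<le> q * D" and "0 < c"
  shows "achievable n k d (a / c) (e / c)"
  unfolding achievable_def
proof (intro allI impI)
  fix \<epsilon> :: real assume "\<epsilon> > 0"
  have "1 \<le> real D" using P[of 1] by simp
  have "((\<lambda>q. real e / c * (ln (real q) / (ln (real q) + ln D))) \<longlongrightarrow> real e / c * 1) at_top"
    by (intro tendsto_mult tendsto_const) real_asymp
  then have "\<forall>\<^sub>F q in at_top. real e / c - \<epsilon> < real e / c * (ln (real q) / (ln (real q) + ln D))"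
    using \<open>\<epsilon> > 0\<close> by (intro order_tendstoD) auto
  then have "\<forall>\<^sub>F q in at_top. 2 \<le> q \<and>
      real e / c - \<epsilon> < real e / c * (ln (real q) / (ln (real q) + ln D))"
    by (simp add: eventually_conj_iff)
  then obtain q :: nat where q: "2 \<le> q"
    and close: "real e / c - \<epsilon> < real e / c * (ln q / (ln q + ln D))"
    unfolding eventually_sequentially by (meson order_refl)
  have "2 \<le> P q" "real (P q) \<le> real q * D"
    using P[of q] q by (simp_all flip: of_nat_mult)
  then have "ln (P q) \<le> ln (real q * D)"
    by (subst ln_le_cancel_iff) auto
  also have "\<dots> = ln q + ln D"
    using q \<open>1 \<le> real D\<close> by (simp add: ln_mult)
  finally have lnP: "0 < ln (P q)" "ln (P q) \<le> ln q + ln D"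
    using \<open>2 \<le> P q\<close> by simp_all
  have "real e / c * (ln q / (ln q + ln D)) \<le> real e / c * (ln q / ln (P q))"
    using lnP q \<open>1 \<le> real D\<close> by (intro mult_left_mono divide_left_mono) auto
  also have "\<dots> = ln (real (q ^ e)) / ln (real (P q ^ c))"
    using lnP by (simp add: ln_realpow)
  finally have "real e / c - \<epsilon> \<le> ln (real (q ^ e)) / ln (real (P q ^ c))"
    using close by linarith
  moreover have "ln (real (P q ^ a)) / ln (real (P q ^ c)) = real a / c"
    using lnP \<open>0 < c\<close> by (simp add: ln_realpow)
  ultimately show "\<exists>N Nd K. ER_code n k d N Nd K \<and>
      ln (real Nd) / ln (real K) \<le> real a / real c + \<epsilon> \<and>
      real e / real c - \<epsilon> \<le> ln (real N) / ln (real K)"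
    using codes[of q] q \<open>\<epsilon> > 0\<close> by (intro exI[of _ "q ^ e"] exI[of _ "P q ^ a"] exI[of _ "P q ^ c"]) auto
qed

lemma binomial_as_ratios:
  assumes "2 \<le> r" "r \<le> n"
  shows "real ((n - 1) choose (r - 1)) = (real n - 1) * real ((n - 2) choose (r - 2)) / (real r - 1)"
    and "real (n choose r) = real n * (real n - 1) * real ((n - 2) choose (r - 2)) / (real r * (real r - 1))"
proof -
  have "(r - 1) * ((n - 1) choose (r - 1)) = (n - 1) * ((n - 2) choose (r - 2))"
    using binomial_absorption[of "r - 2" "n - 1"] assms by (simp add: Suc_diff_Suc numeral_2_eq_2)
  then have "real (r - 1) * real ((n - 1) choose (r - 1)) = real (n - 1) * real ((n - 2) choose (r - 2))"
    by (metis of_nat_mult)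
  then show C: "real ((n - 1) choose (r - 1)) = (real n - 1) * real ((n - 2) choose (r - 2)) / (real r - 1)"
    using assms by (simp add: of_nat_diff field_simps)
  have "r * (n choose r) = n * ((n - 1) choose (r - 1))"
    using binomial_absorption[of "r - 1" n] assms by simp
  then have "real r * real (n choose r) = real n * real ((n - 1) choose (r - 1))"
    by (metis of_nat_mult)
  then have "real (n choose r) = real n * real ((n - 1) choose (r - 1)) / real r"
    using assms by (simp add: field_simps)
  then show "real (n choose r) = real n * (real n - 1) * real ((n - 2) choose (r - 2)) / (real r * (real r - 1))"
    unfolding C by (simp add: ac_simps)
qed

lemma layered_achievable:
  fixes n \<tau>1 \<tau>2 r t :: nat
  assumes "1 \<le> \<tau>2" "\<tau>2 \<le> \<tau>1" "\<tau>1 < r" "r \<le> n" "1 \<le> t"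
  shows "achievable n (n - \<tau>1) (n - \<tau>2) ((real n - 1) / ((real r - 1) * t))
    (real n * (real n - 1) * real (r - \<tau>1) / (real r * (real r - 1) * t))"
proof -
  define \<kappa> where "\<kappa> = r - \<tau>1"
  define b where "b = (n - 2) choose (r - 2)"
  have ach: "achievable n (n - \<tau>1) (n - \<tau>2) (real ((n - 1) choose (r - 1)) / real (b * t))
      (real ((n choose r) * \<kappa>) / real (b * t))"
  proof (rule achievable_of_code_family)
    fix q :: nat assume "1 \<le> q"
    show "ER_code n (n - \<tau>1) (n - \<tau>2) (q ^ ((n choose r) * \<kappa>))
        ((q * \<kappa> * n ^ \<kappa> + 1) ^ ((n - 1) choose (r - 1))) ((q * \<kappa> * n ^ \<kappa> + 1) ^ (b * t))"
      using layered_ER_code[OF assms(1-4) \<open>1 \<le> q\<close> assms(5)] unfolding \<kappa>_def b_def .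
    have "1 \<le> \<kappa> * n ^ \<kappa>" using assms unfolding \<kappa>_def by simp
    then show "2 \<le> q * \<kappa> * n ^ \<kappa> + 1 \<and> q * \<kappa> * n ^ \<kappa> + 1 \<le> q * (\<kappa> * n ^ \<kappa> + 1)"
      using \<open>1 \<le> q\<close> by (simp add: algebra_simps)
  next
    show "0 < b * t" using assms unfolding b_def by (simp add: zero_less_binomial)
  qed
  have "0 < real b" using assms unfolding b_def by (simp add: zero_less_binomial)
  then show ?thesis
    using ach binomial_as_ratios[of r n] assms unfolding b_def \<kappa>_def
    by (simp add: ac_simps)
qed

section \<open>Achievable exponents\<close>

definition log_exponent :: "(nat \<Rightarrow> real) \<Rightarrow> real \<Rightarrow> bool" where
  "log_exponent g v \<longleftrightarrow>
     (\<forall>\<^sub>F n in sequentially. 0 < g n) \<and> ((\<lambda>n. ln (g n) / ln (real n)) \<longlonglongrightarrow> v)"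

lemma log_exponent_powr: "log_exponent (\<lambda>n. real n powr v) v"
  unfolding log_exponent_def
proof
  show "\<forall>\<^sub>F n in sequentially. 0 < real n powr v"
    using eventually_gt_at_top[of 0] by eventually_elim simp
  have "\<forall>\<^sub>F n in sequentially. v = ln (real n powr v) / ln (real n)"
    using eventually_gt_at_top[of 1] by eventually_elim (simp add: ln_powr)
  then show "(\<lambda>n. ln (real n powr v) / ln (real n)) \<longlonglongrightarrow> v"
    by (rule Lim_transform_eventually[OF tendsto_const])
qed

lemma log_exponent_comparable:
  assumes "log_exponent g v" "0 < a" "0 < b"
    and "\<forall>\<^sub>F n in sequentially. a * g n \<le> h n \<and> h n \<le> b * g n"
  shows "log_exponent h v"
proof -
  have lim: "(\<lambda>n. ln c / ln (real n) + ln (g n) / ln (real n)) \<longlonglongrightarrow> v" for c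
    using tendsto_add[OF tendsto_divide_0[OF tendsto_const
        filterlim_at_top_imp_at_infinity[OF filterlim_ln_real_sequentially]]] assms(1)
    unfolding log_exponent_def by fastforce
  have ev: "\<forall>\<^sub>F n in sequentially. 0 < h n \<and>
      ln a / ln (real n) + ln (g n) / ln (real n) \<le> ln (h n) / ln (real n) \<and>
      ln (h n) / ln (real n) \<le> ln b / ln (real n) + ln (g n) / ln (real n)"
    using conjunct1[OF assms(1)[unfolded log_exponent_def]] assms(4) eventually_gt_at_top[of 1]
  proof eventually_elim
    case (elim n)
    have "0 < a * g n" "0 < b * g n" using assms(2,3) elim(1) by simp_all
    then have "0 < h n" using elim(2) by linarith
    then have "ln (a * g n) \<le> ln (h n)" "ln (h n) \<le> ln (b * g n)"
      using \<open>0 < a * g n\<close> elim(2) by simp_all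
    then have "ln a + ln (g n) \<le> ln (h n)" "ln (h n) \<le> ln b + ln (g n)"
      using assms(2,3) elim(1) by (simp_all add: ln_mult)
    moreover have "0 < ln (real n)" using elim(3) by simp
    ultimately show ?case
      using \<open>0 < h n\<close> by (simp add: divide_right_mono flip: add_divide_distrib)
  qed
  show ?thesis
    unfolding log_exponent_def
    using ev by (auto elim: eventually_mono intro: real_tendsto_sandwich[OF _ _ lim lim])
qed

lemma log_exponent_mult:
  assumes "log_exponent g v" "log_exponent h w"
  shows "log_exponent (\<lambda>n. g n * h n) (v + w)"
proof -
  have "\<forall>\<^sub>F n in sequentially. 0 < g n \<and> 0 < h n"
    using assms unfolding log_exponent_def by (simp add: eventually_conj_iff)
  then have "\<forall>\<^sub>F n in sequentially. 0 < g n * h n \<and>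
      ln (g n) / ln (real n) + ln (h n) / ln (real n) = ln (g n * h n) / ln (real n)"
    by eventually_elim (simp add: ln_mult add_divide_distrib)
  then show ?thesis
    using assms unfolding log_exponent_def
    by (auto elim: eventually_mono intro: Lim_transform_eventually[OF tendsto_add])
qed

lemma log_exponent_divide:
  assumes "log_exponent g v" "log_exponent h w"
  shows "log_exponent (\<lambda>n. g n / h n) (v - w)"
proof -
  have "\<forall>\<^sub>F n in sequentially. 0 < g n \<and> 0 < h n"
    using assms unfolding log_exponent_def by (simp add: eventually_conj_iff)
  then have "\<forall>\<^sub>F n in sequentially. 0 < g n / h n \<and>
      ln (g n) / ln (real n) - ln (h n) / ln (real n) = ln (g n / h n) / ln (real n)"
    by eventually_elim (simp add: ln_div diff_divide_distrib)
  then show ?thesis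
    using assms unfolding log_exponent_def
    by (auto elim: eventually_mono intro: Lim_transform_eventually[OF tendsto_diff])
qed

lemma log_exponent_max:
  assumes "log_exponent g v" "log_exponent h w"
  shows "log_exponent (\<lambda>n. max (g n) (h n)) (max v w)"
proof -
  have "\<forall>\<^sub>F n in sequentially. 0 < g n \<and> 0 < h n \<and> 1 < n"
    using assms eventually_gt_at_top[of 1] unfolding log_exponent_def by (simp add: eventually_conj_iff)
  then have "\<forall>\<^sub>F n in sequentially. 0 < max (g n) (h n) \<and>
      max (ln (g n) / ln (real n)) (ln (h n) / ln (real n)) = ln (max (g n) (h n)) / ln (real n)"
  proof eventually_elim
    case (elim n)
    then have "ln (max (g n) (h n)) = max (ln (g n)) (ln (h n))"
      by (auto simp: max_def)
    with elim show ?case by (simp add: max_divide_distrib_right less_max_iff_disj)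
  qed
  then show ?thesis
    using assms unfolding log_exponent_def
    by (auto elim: eventually_mono intro: Lim_transform_eventually[OF tendsto_max])
qed

lemma log_exponent_const: "0 < c \<Longrightarrow> log_exponent (\<lambda>_. c) 0"
  by (rule log_exponent_comparable[OF log_exponent_powr[of 0], where a = c and b = c])
    (use eventually_gt_at_top[of 0] in \<open>auto elim: eventually_mono\<close>)

lemma log_exponent_real: "log_exponent real 1"
  by (rule log_exponent_comparable[OF log_exponent_powr[of 1], where a = 1 and b = 1])
    (use eventually_gt_at_top[of 0] in \<open>auto elim: eventually_mono\<close>)

lemma log_exponent_diff_const:
  assumes "log_exponent g v" "0 \<le> c" "\<forall>\<^sub>F n in sequentially. c + 1 \<le> g n"
  shows "log_exponent (\<lambda>n. g n - c) v"
proof (rule log_exponent_comparable[OF assms(1), of "1 / (c + 1)" 1])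
  show "\<forall>\<^sub>F n in sequentially. 1 / (c + 1) * g n \<le> g n - c \<and> g n - c \<le> 1 * g n"
    using assms(3)
  proof eventually_elim
    case (elim n)
    have "g n \<le> (c + 1) * (g n - c)"
      using elim assms(2) mult_left_mono[of 1 "g n - c" c] by (simp add: algebra_simps)
    then show ?case
      using assms(2) by (simp add: field_simps)
  qed
qed (use assms(2) in auto)

definition layer_size :: "nat \<Rightarrow> real \<Rightarrow> nat \<Rightarrow> nat" where
  "layer_size \<tau> u n = min n (max (\<tau> + 1) (nat \<lceil>real n powr u\<rceil>))"

definition padding :: "real \<Rightarrow> nat \<Rightarrow> nat" where
  "padding w n = nat \<lceil>real n powr w\<rceil>"

lemma layer_size_bounds:
  assumes "0 \<le> u" "u \<le> 1" "\<tau> + 2 \<le> n"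
  shows "real n powr u \<le> layer_size \<tau> u n" "real (layer_size \<tau> u n) \<le> real (\<tau> + 2) * real n powr u"
    "\<tau> + 1 \<le> layer_size \<tau> u n" "layer_size \<tau> u n \<le> n"
proof -
  define P where "P = real n powr u"
  have "1 \<le> P" "P \<le> real n"
    unfolding P_def using assms powr_mono[OF assms(2), of n] by (auto simp: ge_one_powr_ge_zero)
  then have ceil: "P \<le> nat \<lceil>P\<rceil>" "nat \<lceil>P\<rceil> \<le> P + 1" "nat \<lceil>P\<rceil> \<le> n"
    by (linarith, linarith, simp add: nat_le_iff ceiling_le_iff)
  then have r_eq: "layer_size \<tau> u n = max (\<tau> + 1) (nat \<lceil>P\<rceil>)"
    unfolding layer_size_def P_def[symmetric] using assms(3) by simp
  show "real n powr u \<le> layer_size \<tau> u n" "\<tau> + 1 \<le> layer_size \<tau> u n"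
    unfolding r_eq P_def[symmetric] using ceil by auto
  show "layer_size \<tau> u n \<le> n"
    unfolding r_eq using ceil assms(3) by simp
  have "real \<tau> + 1 \<le> (\<tau> + 2) * P" "P + 1 \<le> (\<tau> + 2) * P"
    using \<open>1 \<le> P\<close> mult_left_mono[OF \<open>1 \<le> P\<close>, of \<tau>] by (simp_all add: algebra_simps)
  then show "real (layer_size \<tau> u n) \<le> real (\<tau> + 2) * real n powr u"
    unfolding r_eq P_def[symmetric] using ceil by (auto simp: of_nat_max)
qed

lemma padding_bounds:
  assumes "0 \<le> w" "1 \<le> n"
  shows "real n powr w \<le> padding w n" "padding w n \<le> 2 * real n powr w" "1 \<le> padding w n"
proof -
  have "1 \<le> real n powr w" using assms by (simp add: ge_one_powr_ge_zero)
  then show "real n powr w \<le> padding w n" "padding w n \<le> 2 * real n powr w" "1 \<le> padding w n"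
    unfolding padding_def by linarith+
qed

lemma log_exponent_layer_size:
  assumes "0 \<le> u" "u \<le> 1"
  shows "log_exponent (\<lambda>n. real (layer_size \<tau> u n)) u"
proof (rule log_exponent_comparable[OF log_exponent_powr[of u], where a = 1 and b = "real (\<tau> + 2)"])
  show "\<forall>\<^sub>F n in sequentially. 1 * real n powr u \<le> real (layer_size \<tau> u n) \<and>
      real (layer_size \<tau> u n) \<le> real (\<tau> + 2) * real n powr u"
    using eventually_ge_at_top[of "\<tau> + 2"] by eventually_elim (use layer_size_bounds(1,2)[OF assms] in auto)
qed simp_all

lemma log_exponent_padding:
  assumes "0 \<le> w"
  shows "log_exponent (\<lambda>n. real (padding w n)) w"
proof (rule log_exponent_comparable[OF log_exponent_powr[of w], where a = 1 and b = 2])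
  show "\<forall>\<^sub>F n in sequentially. 1 * real n powr w \<le> real (padding w n) \<and>
      real (padding w n) \<le> 2 * real n powr w"
    using eventually_ge_at_top[of 1] by eventually_elim (simp add: padding_bounds[OF assms])
qed simp_all

lemma achievable_mono:
  assumes "achievable n k d \<alpha> M" "\<alpha> \<le> \<alpha>'" "M' \<le> M"
  shows "achievable n k d \<alpha>' M'"
  using assms unfolding achievable_def by (meson add_right_mono diff_right_mono order.trans)

lemma layered_point_in_Eset:
  fixes n \<tau>1 \<tau>2 r t :: nat and E :: real
  defines "M \<equiv> real n * (real n - 1) * real (r - \<tau>1) / (real r * (real r - 1) * t)"
    and "X \<equiv> real n * (real n - 1) * real \<tau>1 / (real r * (real r - 1) * t)"
  assumes "1 \<le> \<tau>2" "\<tau>2 \<le> \<tau>1" "\<tau>1 < r" "r \<le> n" "1 \<le> t" "0 < E"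
  shows "(ln (max X E) / ln n, ln M / ln n) \<in> Eset \<tau>1 \<tau>2 n"
proof -
  define \<alpha> where "\<alpha> = (real n - 1) / ((real r - 1) * t)"
  have "1 < real r" "0 < real n" using assms by auto
  have "M + X = real n * (real n - 1) * (real (r - \<tau>1) + real \<tau>1) / (real r * (real r - 1) * t)"
    unfolding M_def X_def by (simp add: add_divide_distrib distrib_left)
  also have "\<dots> = real n * \<alpha>"
    using assms(5) \<open>1 < real r\<close> unfolding \<alpha>_def by (simp add: of_nat_diff)
  finally have "real n * \<alpha> - M = X" by simp
  have "achievable n (n - \<tau>1) (n - \<tau>2) (max \<alpha> ((E + M) / n)) M"
    using layered_achievable[OF assms(3-7)] unfolding \<alpha>_def M_def
    by (rule achievable_mono) auto
  moreover have "real n * max \<alpha> ((E + M) / n) - M = max X E"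
    using \<open>real n * \<alpha> - M = X\<close> \<open>0 < real n\<close> by (simp add: max_mult_distrib_left max_diff_distrib_left)
  moreover have "0 < M"
    using \<open>1 < real r\<close> assms(3-7) unfolding M_def by (simp add: of_nat_diff)
  ultimately show ?thesis
    unfolding Eset_def using \<open>0 < E\<close>
    by (intro CollectI exI[of _ "max \<alpha> ((E + M) / n)"] exI[of _ M]) (simp add: less_max_iff_disj)
qed

lemma log_exponent_layered_rates:
  fixes \<tau> :: nat and u w :: real
  defines "r \<equiv> layer_size \<tau> u" and "t \<equiv> padding w"
  assumes "1 \<le> \<tau>" "0 \<le> u" "u \<le> 1" "0 \<le> w"
  shows "log_exponent (\<lambda>n. real n * (real n - 1) * real (r n - \<tau>) / (real (r n) * (real (r n) - 1) * t n))
      (2 - u - w)"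
    and "log_exponent (\<lambda>n. real n * (real n - 1) * real \<tau> / (real (r n) * (real (r n) - 1) * t n))
      (2 - 2 * u - w)"
proof -
  have R: "log_exponent (\<lambda>n. real (r n)) u"
    unfolding r_def using assms(4,5) by (rule log_exponent_layer_size)
  have r_ge: "\<forall>\<^sub>F n in sequentially. real \<tau> + 1 \<le> real (r n)"
    using eventually_ge_at_top[of "\<tau> + 2"]
    by eventually_elim (use layer_size_bounds(3)[OF assms(4,5)] in \<open>force simp: r_def\<close>)
  have R1: "log_exponent (\<lambda>n. real (r n) - 1) u"
    using R r_ge assms(3) by (intro log_exponent_diff_const) (auto elim!: eventually_mono)
  have "log_exponent (\<lambda>n. real (r n) - \<tau>) u"
    using R r_ge by (intro log_exponent_diff_const) auto
  then have R\<tau>: "log_exponent (\<lambda>n. real (r n - \<tau>)) u"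
  proof (rule log_exponent_comparable[where a = 1 and b = 1])
    show "\<forall>\<^sub>F n in sequentially. 1 * (real (r n) - \<tau>) \<le> real (r n - \<tau>) \<and>
        real (r n - \<tau>) \<le> 1 * (real (r n) - \<tau>)"
      using r_ge by eventually_elim (simp add: of_nat_diff)
  qed simp_all
  have N1: "log_exponent (\<lambda>n. real n - 1) 1"
    using eventually_ge_at_top[of 2] by (intro log_exponent_diff_const[OF log_exponent_real])
      (auto elim!: eventually_mono)
  have T: "log_exponent (\<lambda>n. real (t n)) w"
    unfolding t_def using assms(6) by (rule log_exponent_padding)
  have "log_exponent (\<lambda>n. real n * (real n - 1) * real (r n - \<tau>) / (real (r n) * (real (r n) - 1) * t n))
      ((1 + 1 + u) - (u + u + w))"
    by (intro log_exponent_mult log_exponent_divide log_exponent_real N1 R R1 R\<tau> T)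
  then show "log_exponent (\<lambda>n. real n * (real n - 1) * real (r n - \<tau>) / (real (r n) * (real (r n) - 1) * t n))
      (2 - u - w)"
    by (simp add: algebra_simps)
  have "log_exponent (\<lambda>n. real n * (real n - 1) * real \<tau> / (real (r n) * (real (r n) - 1) * t n))
      ((1 + 1 + 0) - (u + u + w))"
    using assms(3) by (intro log_exponent_mult log_exponent_divide log_exponent_real log_exponent_const N1 R R1 T) simp
  then show "log_exponent (\<lambda>n. real n * (real n - 1) * real \<tau> / (real (r n) * (real (r n) - 1) * t n))
      (2 - 2 * u - w)"
    by (simp add: algebra_simps)
qed

text \<open>A point of \<open>Estar\<close> is reached with layers of size about \<open>n powr u\<close> and padding
  about \<open>n powr w\<close>, where \<open>u + w = 2 - Ed\<close>; the resulting exponent \<open>2 - 2 u - w\<close> of \<open>n \<alpha> - M\<close> is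
  at most \<open>Er\<close> and is raised to \<open>Er\<close> by enlarging \<open>\<alpha>\<close>.\<close>

lemma Estar_subset_limsup_Eset:
  assumes "1 \<le> \<tau>2" "\<tau>2 \<le> \<tau>1"
  shows "Estar \<subseteq> limsup_sets \<tau>1 (Eset \<tau>1 \<tau>2)"
proof
  fix p assume "p \<in> Estar"
  then obtain Er Ed where p: "p = (Er, Ed)" and E: "Ed \<le> Er + 1" "2 * Ed \<le> 2 + Er" "Ed \<le> 2"
    unfolding Estar_def by auto
  define u where "u = min 1 (2 - Ed)"
  define w where "w = 2 - Ed - u"
  have u: "0 \<le> u" "u \<le> 1" and w: "0 \<le> w" and "2 - 2 * u - w \<le> Er"
    using E unfolding u_def w_def by (auto simp: min_def)
  define r where "r = layer_size \<tau>1 u"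
  define t where "t = padding w"
  define M where "M n = real n * (real n - 1) * real (r n - \<tau>1) / (real (r n) * (real (r n) - 1) * t n)" for n
  define X where "X n = real n * (real n - 1) * real \<tau>1 / (real (r n) * (real (r n) - 1) * t n)" for n
  define x where "x n = (ln (max (X n) (real n powr Er)) / ln n, ln (M n) / ln n)" for n
  have x_in: "x n \<in> Eset \<tau>1 \<tau>2 n" if "\<tau>1 + 2 \<le> n" for n
    unfolding x_def M_def X_def r_def t_def
    using assms layer_size_bounds(3,4)[OF u that] padding_bounds(3)[OF w, of n] that
    by (intro layered_point_in_Eset) auto
  have "\<tau>1 \<ge> 1" using assms by simp
  note rates = log_exponent_layered_rates[OF this u w, folded r_def t_def]
  have "(\<lambda>n. ln (M n) / ln n) \<longlonglongrightarrow> Ed"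
    using rates(1) unfolding log_exponent_def M_def w_def by simp
  moreover have "log_exponent (\<lambda>n. max (X n) (real n powr Er)) (max (2 - 2 * u - w) Er)"
    using rates(2) unfolding X_def by (intro log_exponent_max log_exponent_powr)
  then have "(\<lambda>n. ln (max (X n) (real n powr Er)) / ln n) \<longlonglongrightarrow> Er"
    unfolding log_exponent_def using \<open>2 - 2 * u - w \<le> Er\<close> by (simp add: max_absorb2)
  ultimately have "x \<longlonglongrightarrow> p"
    unfolding x_def p by (rule tendsto_Pair[rotated])
  then show "p \<in> limsup_sets \<tau>1 (Eset \<tau>1 \<tau>2)"
    unfolding limsup_sets_def using x_in
    by (intro CollectI exI[of _ "\<lambda>j. j + (\<tau>1 + 2)"] exI[of _ "\<lambda>j. x (j + (\<tau>1 + 2))"] conjI allI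
        filterlim_add_const_nat_at_top LIMSEQ_ignore_initial_segment) auto
qed

theorem mainTheorem1:
  fixes \<tau>1 \<tau>2 :: nat
  assumes "\<tau>1 \<ge> \<tau>2" and "\<tau>2 \<ge> 1"
  shows "Estar = closure (limsup_sets \<tau>1 (Eset \<tau>1 \<tau>2))"
proof
  show "Estar \<subseteq> closure (limsup_sets \<tau>1 (Eset \<tau>1 \<tau>2))"
    using Estar_subset_limsup_Eset[OF assms(2,1)] closure_subset by blast
  show "closure (limsup_sets \<tau>1 (Eset \<tau>1 \<tau>2)) \<subseteq> Estar"
    using limsup_Eset_subset_Estar[OF assms(2,1)] closed_Estar by (rule closure_minimal)
qed

end
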